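(* Under the standing assumptions below, fix $k\ge1$ and define recursively, for $h\ge1$, $$\widetilde{X'_k}(h)=-\sum_{j=1}^{h-1}a_j\,\widetilde{X'_k}(h-j)-\sum_{j=1}^{k}a_{h-1+j}X_{k+1-j}$$ (the $h$-step truncated Wiener–Kolmogorov predictor of order $k$; the first sum is empty for $h=1$). Then for every $h\ge1$, $$X_{k+h}-\widetilde{X'_k}(h)=\sum_{l=0}^{h-1}b_l\,\varepsilon_{k+h-l}-\sum_{j=k+1}^{\infty}\Big(\sum_{m=0}^{h-1}a_{j+h-1-m}\,b_m\Big)X_{k+1-j},$$ and consequently $$\mathbb E\big[(\widetilde{X'_k}(h)-X_{k+h})^2\big]=\sigma_\varepsilon^2\sum_{l=0}^{h-1}b_l^2+\mathbb E\Big[\Big(\sum_{j=k+1}^{\infty}\Big(\sum_{m=0}^{h-1}a_{j+h-1-m}b_m\Big)X_{k+1-j}\Big)^2\Big].$$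
   Context: Standing assumptions. Let $(X_n)_{n\in\mathbb Z}$ be a real, zero-mean, weakly stationary process in $L^2$ with autocovariance function $\sigma(j)=\mathbb E[X_nX_{n+j}]$, satisfying $\sum_{j\in\mathbb Z}|\sigma(j)|=\infty$. Assume $X_n=\sum_{j\ge0}b_j\varepsilon_{n-j}$ (convergence in $L^2$). Here $(\varepsilon_n)_{n\in\mathbb Z}$ is a sequence of uncorrelated random variables with mean $0$ and variance $\sigma_\varepsilon^2>0$, and $b_0=1$, $\sum_j b_j^2<\infty$. Assume also $\varepsilon_n=\sum_{j\ge0}a_jX_{n-j}$ with $a_0=1$ and $\sum_j|a_j|<\infty$. The power series $A(z)=\sum_{j\ge0}a_jz^j$ and $B(z)=\sum_{j\ge0}b_jz^j$ satisfy $A(z)B(z)=1$ for $|z|\le1$. Fix $d\in(0,1/2)$. Assume that for every $\delta>0$ there exist constants $C_1,C_2$ (depending on $\delta$) such that $|a_j|\le C_1j^{-d-1+\delta}$ and $|b_j|\le C_2j^{d-1+\delta}$ for all $j\ge1$. *)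

theory Defs
  imports "HOL-Probability.Probability"
begin

definition L2_sums :: "'a measure \<Rightarrow> (nat \<Rightarrow> 'a \<Rightarrow> real) \<Rightarrow> ('a \<Rightarrow> real) \<Rightarrow> bool" where
  "L2_sums M f S \<longleftrightarrow>
     (\<forall>j. f j \<in> borel_measurable M \<and> integrable M (\<lambda>\<omega>. (f j \<omega>)\<^sup>2)) \<and>
     S \<in> borel_measurable M \<and> integrable M (\<lambda>\<omega>. (S \<omega>)\<^sup>2) \<and>
     ((\<lambda>N. integral\<^sup>L M (\<lambda>\<omega>. (S \<omega> - (\<Sum>j<N. f j \<omega>))\<^sup>2)) \<longlonglongrightarrow> 0)"

text \<open>The h-step truncated Wiener--Kolmogorov predictor of order k
  (meaningful for h >= 1; the value at h = 0 is an irrelevant placeholder 0).\<close>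
fun tWK_pred :: "(nat \<Rightarrow> real) \<Rightarrow> (int \<Rightarrow> 'a \<Rightarrow> real) \<Rightarrow> nat \<Rightarrow> nat \<Rightarrow> 'a \<Rightarrow> real" where
  "tWK_pred a X k h \<omega> =
     (if h = 0 then 0
      else - (\<Sum>j\<in>{1..<h}. a j * tWK_pred a X k (h - j) \<omega>)
           - (\<Sum>j\<in>{1..k}. a (h - 1 + j) * X (int k + 1 - int j) \<omega>))"

end

theory Submission
  imports Defs
begin

(*
  The predictor P(h) is defined by a recursion in h; the key observation is that the error
  Y(h) = X(k+h) - P(h) satisfies the triangular system  sum_{j<h} a_j Y(h-j) = U(h)  with
  U(p) = sum_{j<k+p} a_j X(k+p-j), the AR expansion of eps(k+p) truncated to the observed
  values X_1, ..., X_{k+p}. Inverting with b (the coefficients of B = 1/A) gives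
  Y(h) = sum_{m<h} b_m U(h-m), and writing U(p) = eps(k+p) - T(k+p), with T(N) the part of
  the AR expansion of eps N that uses only X_t, t <= 0, yields
      X(k+h) - P(h) = sum_{l<h} b_l eps(k+h-l) - R,   R = sum_{m<h} b_m T(k+h-m).
  Since each T(N) is an L2 limit of past values of X, it is uncorrelated with the future
  innovations eps_n (n >= 1); Pythagoras then gives the mean squared error.
*)

definition square_integrable :: "'a measure \<Rightarrow> ('a \<Rightarrow> real) set" where
  "square_integrable M = {f. f \<in> borel_measurable M \<and> integrable M (\<lambda>x. (f x)\<^sup>2)}"

lemma square_integrableI:
  "f \<in> borel_measurable M \<Longrightarrow> integrable M (\<lambda>x. (f x)\<^sup>2) \<Longrightarrow> f \<in> square_integrable M"
  by (simp add: square_integrable_def)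

lemma square_integrableD:
  assumes "f \<in> square_integrable M"
  shows "f \<in> borel_measurable M" "integrable M (\<lambda>x. (f x)\<^sup>2)"
  using assms by (simp_all add: square_integrable_def)

(* |fg| <= f^2 + g^2, so products of square-integrable functions are integrable. *)
lemma square_integrable_mult_integrable:
  assumes f: "f \<in> square_integrable M" and g: "g \<in> square_integrable M"
  shows "integrable M (\<lambda>x. f x * g x)"
proof (rule Bochner_Integration.integrable_bound)
  show "integrable M (\<lambda>x. (f x)\<^sup>2 + (g x)\<^sup>2)"
    using f g by (simp add: square_integrable_def)
  show "(\<lambda>x. f x * g x) \<in> borel_measurable M"
    using f g by (auto simp: square_integrable_def)
  have "\<bar>f x * g x\<bar> \<le> (f x)\<^sup>2 + (g x)\<^sup>2" for x
  proof -
    have "2 * (\<bar>f x\<bar> * \<bar>g x\<bar>) \<le> (f x)\<^sup>2 + (g x)\<^sup>2"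
      using sum_squares_bound[of "\<bar>f x\<bar>" "\<bar>g x\<bar>"] by simp
    moreover have "0 \<le> \<bar>f x\<bar> * \<bar>g x\<bar>" by simp
    ultimately show ?thesis by (simp only: abs_mult)
  qed
  then show "AE x in M. norm (f x * g x) \<le> norm ((f x)\<^sup>2 + (g x)\<^sup>2)"
    by simp
qed

lemma square_integrable_add:
  assumes f: "f \<in> square_integrable M" and g: "g \<in> square_integrable M"
  shows "(\<lambda>x. f x + g x) \<in> square_integrable M"
proof (rule square_integrableI)
  have "integrable M (\<lambda>x. (f x)\<^sup>2 + (g x)\<^sup>2 + 2 * (f x * g x))"
    using f g square_integrable_mult_integrable[OF f g] by (simp add: square_integrable_def)
  then show "integrable M (\<lambda>x. (f x + g x)\<^sup>2)"
    by (simp add: power2_sum algebra_simps)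
qed (use f g in \<open>auto simp: square_integrable_def\<close>)

lemma square_integrable_cmult: "f \<in> square_integrable M \<Longrightarrow> (\<lambda>x. c * f x) \<in> square_integrable M"
  by (auto simp: square_integrable_def power_mult_distrib)

lemma square_integrable_diff:
  "f \<in> square_integrable M \<Longrightarrow> g \<in> square_integrable M \<Longrightarrow> (\<lambda>x. f x - g x) \<in> square_integrable M"
  using square_integrable_add[of f M "\<lambda>x. -1 * g x"] square_integrable_cmult[of g M "-1"] by simp

lemma square_integrable_sum:
  "(\<And>i. i \<in> I \<Longrightarrow> f i \<in> square_integrable M) \<Longrightarrow> (\<lambda>x. \<Sum>i\<in>I. f i x) \<in> square_integrable M"
proof (induction I rule: infinite_finite_induct)
  case (insert i I)
  then show ?case by (simp add: square_integrable_add)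
qed (simp_all add: square_integrable_def)

lemma integral_mult_sum:
  assumes Z: "Z \<in> square_integrable M" and W: "\<And>j. j \<in> I \<Longrightarrow> W j \<in> square_integrable M"
  shows "integral\<^sup>L M (\<lambda>x. Z x * (\<Sum>j\<in>I. c j * W j x)) = (\<Sum>j\<in>I. c j * integral\<^sup>L M (\<lambda>x. Z x * W j x))"
proof -
  have "integrable M (\<lambda>x. c j * (Z x * W j x))" if "j \<in> I" for j
    using square_integrable_mult_integrable[OF Z W[OF that]] by simp
  moreover have "(\<lambda>x. Z x * (\<Sum>j\<in>I. c j * W j x)) = (\<lambda>x. \<Sum>j\<in>I. c j * (Z x * W j x))"
    by (simp add: sum_distrib_left mult.left_commute)
  ultimately show ?thesis
    by (simp add: integral_mult_right_zero)
qed

(* Cauchy-Schwarz for E[f g], from the non-negativity of the quadratic t |-> E[(t f - g)^2]. *)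
lemma integral_cauchy_schwarz:
  assumes f: "f \<in> square_integrable M" and g: "g \<in> square_integrable M"
  shows "\<bar>integral\<^sup>L M (\<lambda>x. f x * g x)\<bar>
           \<le> sqrt (integral\<^sup>L M (\<lambda>x. (f x)\<^sup>2)) * sqrt (integral\<^sup>L M (\<lambda>x. (g x)\<^sup>2))"
proof -
  define A where "A = integral\<^sup>L M (\<lambda>x. (f x)\<^sup>2)"
  define B where "B = integral\<^sup>L M (\<lambda>x. (g x)\<^sup>2)"
  define C where "C = integral\<^sup>L M (\<lambda>x. f x * g x)"
  have fg: "integrable M (\<lambda>x. f x * g x)" by (rule square_integrable_mult_integrable[OF f g])
  have quadratic: "0 \<le> t\<^sup>2 * A - 2 * t * C + B" for t
  proof -
    have "0 \<le> integral\<^sup>L M (\<lambda>x. (t * f x - g x)\<^sup>2)"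
      by (rule integral_nonneg_AE) simp
    also have "(\<lambda>x. (t * f x - g x)\<^sup>2) = (\<lambda>x. t\<^sup>2 * (f x)\<^sup>2 - 2 * t * (f x * g x) + (g x)\<^sup>2)"
      by (simp add: fun_eq_iff power2_diff power_mult_distrib algebra_simps)
    also have "integral\<^sup>L M \<dots> = t\<^sup>2 * A - 2 * t * C + B"
      using f g fg by (simp add: A_def B_def C_def square_integrable_def)
    finally show ?thesis .
  qed
  have A_nonneg: "0 \<le> A" unfolding A_def by (rule integral_nonneg_AE) simp
  have "C\<^sup>2 \<le> A * B"
  proof (cases "A = 0")
    case True
    have "C = 0"
    proof (rule ccontr)
      assume "C \<noteq> 0"
      with quadratic[of "(B + 1) / (2 * C)"] True show False by (simp add: field_simps)
    qed
    then show ?thesis using True by simp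
  next
    case False
    with A_nonneg have "0 < A" by simp
    with quadratic[of "C / A"] have "0 \<le> B - C\<^sup>2 / A"
      by (simp add: field_simps power2_eq_square)
    with \<open>0 < A\<close> show ?thesis by (simp add: field_simps)
  qed
  then have "sqrt (C\<^sup>2) \<le> sqrt (A * B)" by (rule real_sqrt_le_mono)
  then show ?thesis by (simp add: A_def B_def C_def real_sqrt_mult)
qed

lemma L2_sums_square_integrable:
  assumes "L2_sums M f S"
  shows "S \<in> square_integrable M" "f j \<in> square_integrable M"
  using assms by (simp_all add: L2_sums_def square_integrable_def)

lemma L2_sums_residual:
  assumes "L2_sums M f S"
  shows "(\<lambda>N. integral\<^sup>L M (\<lambda>x. (S x - (\<Sum>j<N. f j x))\<^sup>2)) \<longlonglongrightarrow> 0"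
  using assms by (simp add: L2_sums_def)

(* Mean-square null sequences are closed under sums, via (u + v)^2 <= 2 u^2 + 2 v^2. *)
lemma mean_square_null_add:
  assumes u: "\<And>N. u N \<in> square_integrable M" and v: "\<And>N. v N \<in> square_integrable M"
    and u0: "(\<lambda>N. integral\<^sup>L M (\<lambda>x. (u N x)\<^sup>2)) \<longlonglongrightarrow> 0"
    and v0: "(\<lambda>N. integral\<^sup>L M (\<lambda>x. (v N x)\<^sup>2)) \<longlonglongrightarrow> 0"
  shows "(\<lambda>N. integral\<^sup>L M (\<lambda>x. (u N x + v N x)\<^sup>2)) \<longlonglongrightarrow> 0"
proof (rule Lim_null_comparison)
  have "integral\<^sup>L M (\<lambda>x. (u N x + v N x)\<^sup>2) \<le> integral\<^sup>L M (\<lambda>x. 2 * (u N x)\<^sup>2 + 2 * (v N x)\<^sup>2)" for N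
  proof (rule integral_mono)
    show "integrable M (\<lambda>x. (u N x + v N x)\<^sup>2)"
      using square_integrable_add[OF u v] by (rule square_integrableD)
    show "integrable M (\<lambda>x. 2 * (u N x)\<^sup>2 + 2 * (v N x)\<^sup>2)"
      using u v by (simp add: square_integrable_def)
    show "(u N x + v N x)\<^sup>2 \<le> 2 * (u N x)\<^sup>2 + 2 * (v N x)\<^sup>2" for x
      using sum_squares_bound[of "u N x" "v N x"] by (simp add: power2_sum)
  qed
  also have "integral\<^sup>L M (\<lambda>x. 2 * (u N x)\<^sup>2 + 2 * (v N x)\<^sup>2)
      = 2 * integral\<^sup>L M (\<lambda>x. (u N x)\<^sup>2) + 2 * integral\<^sup>L M (\<lambda>x. (v N x)\<^sup>2)" for N
    using u v by (simp add: square_integrable_def)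
  finally show "\<forall>\<^sub>F N in sequentially. norm (integral\<^sup>L M (\<lambda>x. (u N x + v N x)\<^sup>2))
      \<le> 2 * integral\<^sup>L M (\<lambda>x. (u N x)\<^sup>2) + 2 * integral\<^sup>L M (\<lambda>x. (v N x)\<^sup>2)"
    by (intro always_eventually allI) simp
  show "(\<lambda>N. 2 * integral\<^sup>L M (\<lambda>x. (u N x)\<^sup>2) + 2 * integral\<^sup>L M (\<lambda>x. (v N x)\<^sup>2)) \<longlonglongrightarrow> 0"
    using tendsto_add[OF tendsto_mult_right_zero[OF u0] tendsto_mult_right_zero[OF v0]]
    by (simp add: mult.commute)
qed

lemma mean_square_null_sum:
  assumes "finite I" and "\<And>i N. i \<in> I \<Longrightarrow> g i N \<in> square_integrable M"
    and "\<And>i. i \<in> I \<Longrightarrow> (\<lambda>N. integral\<^sup>L M (\<lambda>x. (g i N x)\<^sup>2)) \<longlonglongrightarrow> 0"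
  shows "(\<lambda>N. integral\<^sup>L M (\<lambda>x. (\<Sum>i\<in>I. g i N x)\<^sup>2)) \<longlonglongrightarrow> 0"
  using assms
proof (induction I rule: finite_induct)
  case (insert i I)
  then show ?case
    by (simp add: mean_square_null_add square_integrable_sum)
qed simp

lemma mean_square_null_inner:
  assumes Z: "Z \<in> square_integrable M" and g: "\<And>N. g N \<in> square_integrable M"
    and g0: "(\<lambda>N. integral\<^sup>L M (\<lambda>x. (g N x)\<^sup>2)) \<longlonglongrightarrow> 0"
  shows "(\<lambda>N. integral\<^sup>L M (\<lambda>x. Z x * g N x)) \<longlonglongrightarrow> 0"
proof (rule Lim_null_comparison)
  show "\<forall>\<^sub>F N in sequentially. norm (integral\<^sup>L M (\<lambda>x. Z x * g N x))
      \<le> sqrt (integral\<^sup>L M (\<lambda>x. (Z x)\<^sup>2)) * sqrt (integral\<^sup>L M (\<lambda>x. (g N x)\<^sup>2))"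
    using integral_cauchy_schwarz[OF Z g] by (intro always_eventually allI) simp
  show "(\<lambda>N. sqrt (integral\<^sup>L M (\<lambda>x. (Z x)\<^sup>2)) * sqrt (integral\<^sup>L M (\<lambda>x. (g N x)\<^sup>2))) \<longlonglongrightarrow> 0"
    using tendsto_mult_left_zero[OF tendsto_real_sqrt[OF g0, unfolded real_sqrt_zero]] by (simp add: mult.commute)
qed

lemma L2_sums_inner:
  assumes S: "L2_sums M f S" and Z: "Z \<in> square_integrable M"
  shows "(\<lambda>N. integral\<^sup>L M (\<lambda>x. Z x * (\<Sum>j<N. f j x))) \<longlonglongrightarrow> integral\<^sup>L M (\<lambda>x. Z x * S x)"
proof -
  define r where "r N x = S x - (\<Sum>j<N. f j x)" for N x
  have r: "r N \<in> square_integrable M" for N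
    unfolding r_def using L2_sums_square_integrable[OF S]
    by (intro square_integrable_diff square_integrable_sum)
  have "(\<lambda>N. integral\<^sup>L M (\<lambda>x. Z x * r N x)) \<longlonglongrightarrow> 0"
    unfolding r_def by (intro mean_square_null_inner[OF Z] r[unfolded r_def] L2_sums_residual[OF S])
  moreover have "integral\<^sup>L M (\<lambda>x. Z x * (\<Sum>j<N. f j x))
      = integral\<^sup>L M (\<lambda>x. Z x * S x) - integral\<^sup>L M (\<lambda>x. Z x * r N x)" for N
  proof -
    have "(\<lambda>x. Z x * (\<Sum>j<N. f j x)) = (\<lambda>x. Z x * S x - Z x * r N x)"
      by (simp add: r_def fun_eq_iff algebra_simps)
    then show ?thesis
      using square_integrable_mult_integrable[OF Z] L2_sums_square_integrable[OF S] r by simp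
  qed
  ultimately show ?thesis
    using tendsto_diff[OF tendsto_const] by fastforce
qed

lemma L2_sums_lincomb:
  assumes "finite I" and S: "\<And>m. m \<in> I \<Longrightarrow> L2_sums M (f m) (S m)"
  shows "L2_sums M (\<lambda>j x. \<Sum>m\<in>I. c m * f m j x) (\<lambda>x. \<Sum>m\<in>I. c m * S m x)"
proof -
  note SI = L2_sums_square_integrable[OF S]
  define r where "r m N x = c m * (S m x - (\<Sum>j<N. f m j x))" for m N x
  have r: "r m N \<in> square_integrable M" if "m \<in> I" for m N
    unfolding r_def using SI[OF that]
    by (intro square_integrable_cmult square_integrable_diff square_integrable_sum)
  have "(\<lambda>N. integral\<^sup>L M (\<lambda>x. (r m N x)\<^sup>2)) \<longlonglongrightarrow> 0" if "m \<in> I" for m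
    using tendsto_mult_right_zero[OF L2_sums_residual[OF S[OF that]], of "(c m)\<^sup>2"]
    by (simp add: r_def power_mult_distrib)
  then have "(\<lambda>N. integral\<^sup>L M (\<lambda>x. (\<Sum>m\<in>I. r m N x)\<^sup>2)) \<longlonglongrightarrow> 0"
    using \<open>finite I\<close> r by (intro mean_square_null_sum)
  moreover have "(\<Sum>m\<in>I. r m N x) = (\<Sum>m\<in>I. c m * S m x) - (\<Sum>j<N. \<Sum>m\<in>I. c m * f m j x)" for N x
    by (simp add: r_def right_diff_distrib sum_subtractf sum_distrib_left sum.swap[of _ "{..<N}"])
  moreover have "(\<lambda>x. \<Sum>m\<in>I. c m * g m x) \<in> square_integrable M"
    if "\<And>m. m \<in> I \<Longrightarrow> g m \<in> square_integrable M" for g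
    using that by (intro square_integrable_sum square_integrable_cmult)
  ultimately show ?thesis
    unfolding L2_sums_def using SI by (simp add: square_integrable_def)
qed

lemma integral_square_diff_orthogonal:
  assumes f: "f \<in> square_integrable M" and g: "g \<in> square_integrable M"
    and orth: "integral\<^sup>L M (\<lambda>x. f x * g x) = 0"
  shows "integral\<^sup>L M (\<lambda>x. (f x - g x)\<^sup>2) = integral\<^sup>L M (\<lambda>x. (f x)\<^sup>2) + integral\<^sup>L M (\<lambda>x. (g x)\<^sup>2)"
proof -
  have "(\<lambda>x. (f x - g x)\<^sup>2) = (\<lambda>x. (f x)\<^sup>2 + (g x)\<^sup>2 - 2 * (f x * g x))"
    by (simp add: fun_eq_iff power2_diff)
  then show ?thesis
    using f g orth square_integrable_mult_integrable[OF f g] by (simp add: square_integrable_def)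
qed

lemma sum_lessThan_add_split:
  fixes n m :: nat
  shows "(\<Sum>j<n + m. g j) = (\<Sum>j<n. g j) + (\<Sum>i<m. g (n + i))"
  by (induction m) (simp_all add: ac_simps)

(* b is the inverse of a for the Cauchy product, i.e. A(z) B(z) = 1 as formal power series. *)
definition convolution_inverse :: "(nat \<Rightarrow> 'a::comm_ring_1) \<Rightarrow> (nat \<Rightarrow> 'a) \<Rightarrow> bool" where
  "convolution_inverse a b \<longleftrightarrow> (\<forall>p. (\<Sum>j\<le>p. a j * b (p - j)) = (if p = 0 then 1 else 0))"

(* Convolving a with (b * U) gives back U: the identity (a * b) * U = U read at index h. *)
lemma convolution_inverse_apply:
  fixes a b U :: "nat \<Rightarrow> 'a::comm_ring_1"
  assumes inv: "convolution_inverse a b" and h: "h \<ge> 1"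
  shows "(\<Sum>j<h. a j * (\<Sum>m<h - j. b m * U (h - j - m))) = U h"
proof -
  have "(\<Sum>j<h. a j * (\<Sum>m<h - j. b m * U (h - j - m)))
      = (\<Sum>(j, m)\<in>(SIGMA j:{..<h}. {..<h - j}). a j * (b m * U (h - j - m)))"
    by (simp add: sum_distrib_left sum.Sigma)
  also have "(SIGMA j:{..<h}. {..<h - j}) = {(j, m). j + m < h}"
    by auto
  also have "(\<Sum>(j, m)\<in>{(j, m). j + m < h}. a j * (b m * U (h - j - m)))
      = (\<Sum>p<h. (\<Sum>j\<le>p. a j * b (p - j)) * U (h - p))"
    by (subst sum.triangle_reindex)
       (auto simp: sum_distrib_right mult.assoc intro!: sum.cong)
  also have "\<dots> = (\<Sum>p<h. if p = 0 then U (h - p) else 0)"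
    using inv by (intro sum.cong refl) (simp add: convolution_inverse_def)
  also have "\<dots> = U h"
    using h by (subst sum.delta) auto
  finally show ?thesis .
qed

(* If a0 = 1, the triangular system  sum_{j<h} a_j Y(h-j) = U(h)  (h >= 1) has the unique
   solution Y(h) = sum_{m<h} b_m U(h-m); both sequences obey the same recursion. *)
lemma deconvolution:
  fixes a b U Y :: "nat \<Rightarrow> 'a::comm_ring_1"
  assumes inv: "convolution_inverse a b" and a0: "a 0 = 1"
    and rec: "\<And>h. h \<ge> 1 \<Longrightarrow> (\<Sum>j<h. a j * Y (h - j)) = U h"
  shows "h \<ge> 1 \<Longrightarrow> Y h = (\<Sum>m<h. b m * U (h - m))"
proof (induction h rule: less_induct)
  case (less h)
  define Z where "Z h = (\<Sum>m<h. b m * U (h - m))" for h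
  obtain n where h: "h = Suc n" using less.prems by (cases h) auto
  have "(\<Sum>j<h. a j * Z (h - j)) = U h"
    unfolding Z_def using convolution_inverse_apply[OF inv less.prems] by (simp add: diff_diff_add)
  then have "Z h + (\<Sum>i<n. a (Suc i) * Z (h - Suc i)) = U h"
    unfolding h sum.lessThan_Suc_shift by (simp add: a0)
  moreover have "Y h + (\<Sum>i<n. a (Suc i) * Y (h - Suc i)) = U h"
    using rec[OF less.prems] unfolding h sum.lessThan_Suc_shift by (simp add: a0)
  moreover have "(\<Sum>i<n. a (Suc i) * Y (h - Suc i)) = (\<Sum>i<n. a (Suc i) * Z (h - Suc i))"
  proof (intro sum.cong refl)
    fix i assume "i \<in> {..<n}"
    then have "Y (h - Suc i) = Z (h - Suc i)"
      unfolding Z_def using h by (intro less.IH) auto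
    then show "a (Suc i) * Y (h - Suc i) = a (Suc i) * Z (h - Suc i)" by simp
  qed
  ultimately have "Y h + (\<Sum>i<n. a (Suc i) * Z (h - Suc i)) = Z h + (\<Sum>i<n. a (Suc i) * Z (h - Suc i))"
    by simp
  then show ?case
    by (simp add: Z_def)
qed

(* The defining equation of the predictor unfolds forever under the simplifier. *)
declare tWK_pred.simps [simp del]

lemma tWK_pred_recursion:
  fixes a :: "nat \<Rightarrow> real"
  assumes a0: "a 0 = 1" and h: "h \<ge> 1"
  shows "(\<Sum>j<h. a j * (X (int k + int (h - j)) \<omega> - tWK_pred a X k (h - j) \<omega>))
         = (\<Sum>j<k + h. a j * X (int k + int h - int j) \<omega>)"
proof -
  let ?P = "\<lambda>h. tWK_pred a X k h \<omega>"
  let ?x = "\<lambda>j. a j * X (int k + int h - int j) \<omega>"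
  have pred: "?P h = - (\<Sum>j\<in>{1..<h}. a j * ?P (h - j)) - (\<Sum>j\<in>{1..k}. a (h - 1 + j) * X (int k + 1 - int j) \<omega>)"
    using h by (subst tWK_pred.simps) simp
  have head: "(\<Sum>j<h. a j * ?P (h - j)) = ?P h + (\<Sum>j\<in>{1..<h}. a j * ?P (h - j))"
    using h by (simp add: atLeast0LessThan[symmetric] sum.atLeast_Suc_lessThan a0)
  have past: "(\<Sum>j\<in>{1..k}. a (h - 1 + j) * X (int k + 1 - int j) \<omega>) = (\<Sum>i<k. ?x (h + i))"
  proof -
    have "(\<Sum>j\<in>{1..k}. a (h - 1 + j) * X (int k + 1 - int j) \<omega>)
        = (\<Sum>i<k. a (h - 1 + Suc i) * X (int k + 1 - int (Suc i)) \<omega>)"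
      by (simp only: One_nat_def sum.atLeast1_atMost_eq)
    also have "\<dots> = (\<Sum>i<k. ?x (h + i))"
      using h by (intro sum.cong refl) simp
    finally show ?thesis .
  qed
  have "(\<Sum>j<h. a j * (X (int k + int (h - j)) \<omega> - ?P (h - j)))
      = (\<Sum>j<h. ?x j) - (\<Sum>j<h. a j * ?P (h - j))"
    unfolding right_diff_distrib sum_subtractf[symmetric]
    by (intro sum.cong refl) (simp add: of_nat_diff add_diff_eq)
  also have "\<dots> = (\<Sum>j<h. ?x j) + (\<Sum>i<k. ?x (h + i))"
    unfolding head using pred past by simp
  also have "\<dots> = (\<Sum>j<k + h. ?x j)"
    by (simp add: sum_lessThan_add_split add.commute[of k h])
  finally show ?thesis .
qed

lemma tWK_pred_error:
  fixes a b :: "nat \<Rightarrow> real"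
  assumes inv: "convolution_inverse a b" and a0: "a 0 = 1" and h: "h \<ge> 1"
  shows "X (int k + int h) \<omega> - tWK_pred a X k h \<omega>
         = (\<Sum>m<h. b m * (\<Sum>j<k + (h - m). a j * X (int k + int (h - m) - int j) \<omega>))"
proof (rule deconvolution[OF inv a0 _ h,
      where Y = "\<lambda>h. X (int k + int h) \<omega> - tWK_pred a X k h \<omega>"
        and U = "\<lambda>p. \<Sum>j<k + p. a j * X (int k + int p - int j) \<omega>"])
  show "(\<Sum>j<h'. a j * (X (int k + int (h' - j)) \<omega> - tWK_pred a X k (h' - j) \<omega>))
      = (\<Sum>j<k + h'. a j * X (int k + int h' - int j) \<omega>)" if "h' \<ge> 1" for h'
    by (rule tWK_pred_recursion[where a = a, OF a0 that])
qed

lemma sum_lessThan_truncate: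
  fixes g :: "nat \<Rightarrow> 'a::comm_monoid_add"
  assumes "p < N"
  shows "(\<Sum>j<N. if j \<le> p then g j else 0) = (\<Sum>j\<le>p. g j)"
proof -
  have "(\<Sum>j<N. if j \<le> p then g j else 0) = (\<Sum>j\<in>{j\<in>{..<N}. j \<le> p}. g j)"
    by (rule sum.inter_filter[symmetric]) simp
  also have "{j\<in>{..<N}. j \<le> p} = {..p}"
    using assms by auto
  finally show ?thesis .
qed

locale invertible_linear_process =
  fixes M :: "'w measure" and X eps :: "int \<Rightarrow> 'w \<Rightarrow> real" and a b :: "nat \<Rightarrow> real"
    and s2 :: real
  assumes noise_cov: "\<And>n m. integral\<^sup>L M (\<lambda>\<omega>. eps n \<omega> * eps m \<omega>) = (if n = m then s2 else 0)"
    and noise_var_pos: "s2 > 0"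
    and MA: "\<And>n. L2_sums M (\<lambda>j \<omega>. b j * eps (n - int j) \<omega>) (X n)"
    and AR: "\<And>n. L2_sums M (\<lambda>j \<omega>. a j * X (n - int j) \<omega>) (eps n)"
    and a0: "a 0 = 1"
begin

lemma X_square_integrable: "X n \<in> square_integrable M"
  using L2_sums_square_integrable(1)[OF MA] .

lemma eps_square_integrable: "eps n \<in> square_integrable M"
  using L2_sums_square_integrable(1)[OF AR] .

lemma noise_X_cov:
  "integral\<^sup>L M (\<lambda>\<omega>. eps n \<omega> * X t \<omega>) = (if n \<le> t then s2 * b (nat (t - n)) else 0)"
proof -
  define q where "q = nat (t - n)"
  have partial: "integral\<^sup>L M (\<lambda>\<omega>. eps n \<omega> * (\<Sum>j<N. b j * eps (t - int j) \<omega>))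
      = (if n \<le> t \<and> q < N then s2 * b q else 0)" for N
  proof -
    have "integral\<^sup>L M (\<lambda>\<omega>. eps n \<omega> * (\<Sum>j<N. b j * eps (t - int j) \<omega>))
        = (\<Sum>j<N. b j * (if n = t - int j then s2 else 0))"
      by (simp add: integral_mult_sum eps_square_integrable noise_cov)
    also have "\<dots> = (\<Sum>j<N. if j = q then (if n \<le> t then s2 * b j else 0) else 0)"
      by (intro sum.cong refl) (auto simp: q_def)
    also have "\<dots> = (if n \<le> t \<and> q < N then s2 * b q else 0)"
      by (subst sum.delta) auto
    finally show ?thesis .
  qed
  have "(\<lambda>N. integral\<^sup>L M (\<lambda>\<omega>. eps n \<omega> * (\<Sum>j<N. b j * eps (t - int j) \<omega>)))
      \<longlonglongrightarrow> (if n \<le> t then s2 * b q else 0)"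
    unfolding partial by (rule tendsto_eventually, rule eventually_sequentiallyI[of "Suc q"]) auto
  from LIMSEQ_unique[OF L2_sums_inner[OF MA eps_square_integrable] this] show ?thesis
    by (simp add: q_def)
qed

(* The coefficient identity A(z) B(z) = 1 follows from the two representations alone:
   compute E[eps 0 eps p] by expanding eps p through the AR series. *)
lemma coefficients_convolution_inverse: "convolution_inverse a b"
  unfolding convolution_inverse_def
proof
  fix p
  have cov: "integral\<^sup>L M (\<lambda>\<omega>. eps 0 \<omega> * X (int p - int j) \<omega>) = (if j \<le> p then s2 * b (p - j) else 0)"
    for j
    by (simp add: noise_X_cov nat_minus_as_int)
  have partial: "integral\<^sup>L M (\<lambda>\<omega>. eps 0 \<omega> * (\<Sum>j<N. a j * X (int p - int j) \<omega>))
      = (\<Sum>j<N. if j \<le> p then s2 * (a j * b (p - j)) else 0)" for N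
    by (simp add: integral_mult_sum eps_square_integrable X_square_integrable cov)
      (intro sum.cong refl, simp)
  have "(\<lambda>N. integral\<^sup>L M (\<lambda>\<omega>. eps 0 \<omega> * (\<Sum>j<N. a j * X (int p - int j) \<omega>)))
      \<longlonglongrightarrow> s2 * (\<Sum>j\<le>p. a j * b (p - j))"
    unfolding partial
    by (rule tendsto_eventually, rule eventually_sequentiallyI[of "Suc p"])
       (simp add: sum_lessThan_truncate sum_distrib_left)
  from LIMSEQ_unique[OF L2_sums_inner[OF AR eps_square_integrable] this]
  have "s2 * (\<Sum>j\<le>p. a j * b (p - j)) = (if p = 0 then s2 else 0)"
    by (simp add: noise_cov)
  with noise_var_pos show "(\<Sum>j\<le>p. a j * b (p - j)) = (if p = 0 then 1 else 0)"
    by (cases "p = 0") auto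
qed

(* The part of the AR expansion of eps N that involves only the past values X t, t <= 0. *)
definition ar_tail :: "nat \<Rightarrow> 'w \<Rightarrow> real" where
  "ar_tail N \<omega> = eps (int N) \<omega> - (\<Sum>j<N. a j * X (int N - int j) \<omega>)"

lemma ar_tail_sums: "L2_sums M (\<lambda>i \<omega>. a (N + i) * X (- int i) \<omega>) (ar_tail N)"
proof -
  have tail: "ar_tail N \<omega> - (\<Sum>i<n. a (N + i) * X (- int i) \<omega>)
      = eps (int N) \<omega> - (\<Sum>j<N + n. a j * X (int N - int j) \<omega>)" for n \<omega>
    by (simp add: ar_tail_def sum_lessThan_add_split)
  have "(\<lambda>n. integral\<^sup>L M (\<lambda>\<omega>. (eps (int N) \<omega> - (\<Sum>j<n. a j * X (int N - int j) \<omega>))\<^sup>2)) \<longlonglongrightarrow> 0"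
    by (rule L2_sums_residual[OF AR])
  then have "(\<lambda>n. integral\<^sup>L M (\<lambda>\<omega>. (ar_tail N \<omega> - (\<Sum>i<n. a (N + i) * X (- int i) \<omega>))\<^sup>2)) \<longlonglongrightarrow> 0"
    unfolding tail using LIMSEQ_ignore_initial_segment[of _ 0 N] by (simp add: add.commute)
  moreover have "ar_tail N \<in> square_integrable M"
    unfolding ar_tail_def
    by (intro square_integrable_diff square_integrable_sum square_integrable_cmult
        eps_square_integrable X_square_integrable)
  ultimately show ?thesis
    using square_integrable_cmult[OF X_square_integrable]
    by (simp add: L2_sums_def square_integrable_def)
qed

(* The tail depends on X only up to time 0, hence is uncorrelated with every eps n, n >= 1. *)
lemma noise_ar_tail_uncorrelated:
  assumes "n \<ge> 1"
  shows "integral\<^sup>L M (\<lambda>\<omega>. eps n \<omega> * ar_tail N \<omega>) = 0"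
proof -
  have "integral\<^sup>L M (\<lambda>\<omega>. eps n \<omega> * (\<Sum>i<m. a (N + i) * X (- int i) \<omega>)) = 0" for m
    using assms by (simp add: integral_mult_sum eps_square_integrable X_square_integrable noise_X_cov)
  then show ?thesis
    using LIMSEQ_unique[OF L2_sums_inner[OF ar_tail_sums eps_square_integrable]] by simp
qed

definition pred_remainder :: "nat \<Rightarrow> nat \<Rightarrow> 'w \<Rightarrow> real" where
  "pred_remainder k h \<omega> = (\<Sum>m<h. b m * ar_tail (k + (h - m)) \<omega>)"

(* R is the L2 sum of  sum_i (sum_{m<h} a (k + h - m + i) b m) X(-i); these are the
   coefficients of X_{k+1-j}, j = k+1+i, in the theorem. *)
lemma pred_remainder_sums:
  "L2_sums M (\<lambda>i \<omega>. (\<Sum>m<h. a (k + (h - m) + i) * b m) * X (- int i) \<omega>) (pred_remainder k h)"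
proof -
  have "L2_sums M (\<lambda>i \<omega>. \<Sum>m<h. b m * (a (k + (h - m) + i) * X (- int i) \<omega>)) (pred_remainder k h)"
    unfolding pred_remainder_def by (intro L2_sums_lincomb ar_tail_sums) simp
  moreover have "(\<Sum>m<h. b m * (a (k + (h - m) + i) * X (- int i) \<omega>))
      = (\<Sum>m<h. a (k + (h - m) + i) * b m) * X (- int i) \<omega>" for i \<omega>
    by (simp add: sum_distrib_left sum_distrib_right mult_ac)
  ultimately show ?thesis
    by simp
qed

lemma tWK_pred_error_decomposition:
  assumes h: "h \<ge> 1"
  shows "X (int k + int h) \<omega> - tWK_pred a X k h \<omega>
         = (\<Sum>l<h. b l * eps (int k + int h - int l) \<omega>) - pred_remainder k h \<omega>"
proof -
  have "X (int k + int h) \<omega> - tWK_pred a X k h \<omega>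
      = (\<Sum>m<h. b m * (eps (int k + int h - int m) \<omega> - ar_tail (k + (h - m)) \<omega>))"
    unfolding tWK_pred_error[OF coefficients_convolution_inverse a0 h] ar_tail_def
    by (intro sum.cong refl) (simp add: of_nat_diff algebra_simps)
  then show ?thesis
    by (simp add: pred_remainder_def right_diff_distrib sum_subtractf)
qed

lemma future_noise_uncorrelated:
  assumes Z: "Z \<in> square_integrable M" and uncorr: "\<And>n. n \<ge> 1 \<Longrightarrow> integral\<^sup>L M (\<lambda>\<omega>. eps n \<omega> * Z \<omega>) = 0"
    and t: "t \<ge> int h"
  shows "integral\<^sup>L M (\<lambda>\<omega>. Z \<omega> * (\<Sum>l<h. c l * eps (t - int l) \<omega>)) = 0"
proof -
  have "integral\<^sup>L M (\<lambda>\<omega>. Z \<omega> * eps (t - int l) \<omega>) = 0" if "l < h" for l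
    using uncorr[of "t - int l"] that t by (simp add: mult.commute)
  then show ?thesis
    by (simp add: integral_mult_sum[OF Z] eps_square_integrable)
qed

lemma noise_lincomb_square:
  "integral\<^sup>L M (\<lambda>\<omega>. (\<Sum>l<h. c l * eps (t - int l) \<omega>)\<^sup>2) = s2 * (\<Sum>l<h. (c l)\<^sup>2)"
proof -
  let ?S = "\<lambda>\<omega>. \<Sum>l<h. c l * eps (t - int l) \<omega>"
  have S: "?S \<in> square_integrable M"
    by (intro square_integrable_sum square_integrable_cmult eps_square_integrable)
  have "integral\<^sup>L M (\<lambda>\<omega>. ?S \<omega> * eps (t - int l) \<omega>) = s2 * c l" if "l < h" for l
  proof -
    have "integral\<^sup>L M (\<lambda>\<omega>. ?S \<omega> * eps (t - int l) \<omega>)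
        = (\<Sum>l'<h. c l' * integral\<^sup>L M (\<lambda>\<omega>. eps (t - int l) \<omega> * eps (t - int l') \<omega>))"
      by (simp add: mult.commute[of "?S _"] integral_mult_sum eps_square_integrable)
    also have "\<dots> = (\<Sum>l'<h. if l' = l then s2 * c l' else 0)"
      by (intro sum.cong refl) (auto simp: noise_cov)
    finally show ?thesis
      using that by simp
  qed
  then have "integral\<^sup>L M (\<lambda>\<omega>. ?S \<omega> * ?S \<omega>) = (\<Sum>l<h. c l * (s2 * c l))"
    by (simp add: integral_mult_sum[OF S] eps_square_integrable)
  then show ?thesis
    by (simp add: power2_eq_square sum_distrib_left mult_ac)
qed

lemma pred_remainder_square_integrable: "pred_remainder k h \<in> square_integrable M"
  using L2_sums_square_integrable(1)[OF pred_remainder_sums] .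

lemma noise_pred_remainder_uncorrelated:
  assumes "n \<ge> 1"
  shows "integral\<^sup>L M (\<lambda>\<omega>. eps n \<omega> * pred_remainder k h \<omega>) = 0"
  using assms unfolding pred_remainder_def
  by (simp add: integral_mult_sum eps_square_integrable L2_sums_square_integrable(1)[OF ar_tail_sums]
      noise_ar_tail_uncorrelated)

(* Mean squared prediction error: the two parts of the error decomposition are orthogonal. *)
lemma tWK_pred_mse:
  assumes h: "h \<ge> 1"
  shows "integral\<^sup>L M (\<lambda>\<omega>. (tWK_pred a X k h \<omega> - X (int k + int h) \<omega>)\<^sup>2)
         = s2 * (\<Sum>l<h. (b l)\<^sup>2) + integral\<^sup>L M (\<lambda>\<omega>. (pred_remainder k h \<omega>)\<^sup>2)"
proof -
  let ?S = "\<lambda>\<omega>. \<Sum>l<h. b l * eps (int k + int h - int l) \<omega>"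
  let ?R = "pred_remainder k h"
  have S: "?S \<in> square_integrable M"
    by (intro square_integrable_sum square_integrable_cmult eps_square_integrable)
  have "tWK_pred a X k h \<omega> - X (int k + int h) \<omega> = ?R \<omega> - ?S \<omega>" for \<omega>
    using tWK_pred_error_decomposition[OF h, of k \<omega>] by linarith
  then have "integral\<^sup>L M (\<lambda>\<omega>. (tWK_pred a X k h \<omega> - X (int k + int h) \<omega>)\<^sup>2)
      = integral\<^sup>L M (\<lambda>\<omega>. (?R \<omega> - ?S \<omega>)\<^sup>2)"
    by simp
  also have "\<dots> = integral\<^sup>L M (\<lambda>\<omega>. (?R \<omega>)\<^sup>2) + integral\<^sup>L M (\<lambda>\<omega>. (?S \<omega>)\<^sup>2)"
    by (intro integral_square_diff_orthogonal[OF pred_remainder_square_integrable S]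
        future_noise_uncorrelated[OF pred_remainder_square_integrable] noise_pred_remainder_uncorrelated)
      simp_all
  finally show ?thesis
    by (simp add: noise_lincomb_square)
qed

end

(* The theorem: R is the remainder of the error decomposition, whose L2 series has exactly the
   stated coefficients. *)
theorem mainTheorem7:
  fixes M :: "'w measure"
    and X eps :: "int \<Rightarrow> 'w \<Rightarrow> real"
    and a b :: "nat \<Rightarrow> real"
    and \<sigma> :: "int \<Rightarrow> real"
    and \<sigma>\<epsilon> d :: real
    and k h :: nat
  assumes prob: "prob_space M"
    and X_meas: "\<And>n. X n \<in> borel_measurable M"
    and X_L2: "\<And>n. integrable M (\<lambda>\<omega>. (X n \<omega>)\<^sup>2)"
    and X_mean: "\<And>n. integral\<^sup>L M (X n) = 0"
    and X_cov: "\<And>n j. integral\<^sup>L M (\<lambda>\<omega>. X n \<omega> * X (n + j) \<omega>) = \<sigma> j"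
    and \<sigma>_not_abs_summable: "\<not> ((\<lambda>j. \<bar>\<sigma> j\<bar>) summable_on UNIV)"
    and eps_meas: "\<And>n. eps n \<in> borel_measurable M"
    and eps_L2: "\<And>n. integrable M (\<lambda>\<omega>. (eps n \<omega>)\<^sup>2)"
    and eps_mean: "\<And>n. integral\<^sup>L M (eps n) = 0"
    and eps_cov: "\<And>n m. integral\<^sup>L M (\<lambda>\<omega>. eps n \<omega> * eps m \<omega>) = (if n = m then \<sigma>\<epsilon>\<^sup>2 else 0)"
    and \<sigma>\<epsilon>_pos: "\<sigma>\<epsilon>\<^sup>2 > 0"
    and MA: "\<And>n. L2_sums M (\<lambda>j \<omega>. b j * eps (n - int j) \<omega>) (X n)"
    and b0: "b 0 = 1"
    and b_sq: "summable (\<lambda>j. (b j)\<^sup>2)"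
    and AR: "\<And>n. L2_sums M (\<lambda>j \<omega>. a j * X (n - int j) \<omega>) (eps n)"
    and a0: "a 0 = 1"
    and a_abs: "summable (\<lambda>j. \<bar>a j\<bar>)"
    and AB: "\<And>z::complex. norm z \<le> 1 \<Longrightarrow> summable (\<lambda>j. complex_of_real (b j) * z ^ j) \<Longrightarrow>
               (\<Sum>j. complex_of_real (a j) * z ^ j) * (\<Sum>j. complex_of_real (b j) * z ^ j) = 1"
    and d: "0 < d" "d < 1/2"
    and decay: "\<And>\<delta>. \<delta> > 0 \<Longrightarrow> \<exists>C1 C2. \<forall>j\<ge>1.
               \<bar>a j\<bar> \<le> C1 * real j powr (- d - 1 + \<delta>) \<and> \<bar>b j\<bar> \<le> C2 * real j powr (d - 1 + \<delta>)"
    and k: "k \<ge> 1"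
    and h: "h \<ge> 1"
  shows "\<exists>R. L2_sums M
              (\<lambda>i \<omega>. (\<Sum>m<h. a (i + k + 1 + h - 1 - m) * b m) * X (int k + 1 - int (i + k + 1)) \<omega>) R
           \<and> (AE \<omega> in M. X (int k + int h) \<omega> - tWK_pred a X k h \<omega>
                = (\<Sum>l<h. b l * eps (int k + int h - int l) \<omega>) - R \<omega>)
           \<and> integral\<^sup>L M (\<lambda>\<omega>. (tWK_pred a X k h \<omega> - X (int k + int h) \<omega>)\<^sup>2)
                = \<sigma>\<epsilon>\<^sup>2 * (\<Sum>l<h. (b l)\<^sup>2) + integral\<^sup>L M (\<lambda>\<omega>. (R \<omega>)\<^sup>2)"
proof -
  interpret invertible_linear_process M X eps a b "\<sigma>\<epsilon>\<^sup>2"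
    using eps_cov \<sigma>\<epsilon>_pos MA AR a0 by unfold_locales auto
  have "(\<Sum>m<h. a (i + k + 1 + h - 1 - m) * b m) = (\<Sum>m<h. a (k + (h - m) + i) * b m)" for i
    by (intro sum.cong refl) (simp add: add.commute add.left_commute)
  then have "L2_sums M (\<lambda>i \<omega>. (\<Sum>m<h. a (i + k + 1 + h - 1 - m) * b m) * X (int k + 1 - int (i + k + 1)) \<omega>)
      (pred_remainder k h)"
    using pred_remainder_sums[where h = h and k = k] by simp
  then show ?thesis
    using tWK_pred_error_decomposition[OF h] tWK_pred_mse[OF h]
    by (intro exI[of _ "pred_remainder k h"]) auto
qed

end
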